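(* For every integer $r\ge2$, $$\int_0^{\frac\pi2} \theta^{r-2}\log\left(\cos\frac\theta2\right)d\theta=-\frac{\pi^{r-1}}{r-1}\left(\frac1{2^r}\log2+2^{r-1}\log\mathcal C_r\left(\frac14\right)\right).$$
   Context: For an integer $r\ge2$ let $P_r(y)=(1-y)\exp\left(y+\frac{y^2}{2}+\cdots+\frac{y^r}{r}\right)$. The multiple cosine function of Kurokawa–Koyama of order $r\ge2$ is $\mathcal C_r(x)=\prod_{n\ge1,\ n\text{ odd}}\left\{P_r\left(\frac{x}{n/2}\right)P_r\left(-\frac{x}{n/2}\right)^{(-1)^{r-1}}\right\}^{(n/2)^{r-1}}$, interpreted as $\mathcal C_r(x)=\exp\Big(\sum_{n\ge1,\,n\text{ odd}}(n/2)^{r-1}\big[\operatorname{Log}P_r(2x/n)+(-1)^{r-1}\operatorname{Log}P_r(-2x/n)\big]\Big)$, where $\operatorname{Log}P_r(y):=\operatorname{Log}(1-y)+y+\frac{y^2}{2}+\cdots+\frac{y^r}{r}$ with $\operatorname{Log}$ the principal branch. The series converges and defines a holomorphic function on $D=\mathbb C\setminus\big((-\infty,-\tfrac12]\cup[\tfrac12,\infty)\big)$, positive on $(-\tfrac12,\tfrac12)$; $\log\mathcal C_r(x)$ denotes the exponent above (the real logarithm for real $|x|<\tfrac12$). *)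

theory Defs
  imports "HOL-Analysis.Analysis"
begin

definition LogP :: "nat \<Rightarrow> complex \<Rightarrow> complex" where
  "LogP r y = Ln (1 - y) + (\<Sum>j=1..r. y ^ j / of_nat j)"

text \<open>log of the multiple cosine C_r(x): sum over odd n = 2k+1 of
  (n/2)^(r-1) [Log P_r(2x/n) + (-1)^(r-1) Log P_r(-2x/n)].\<close>
definition logC :: "nat \<Rightarrow> complex \<Rightarrow> complex" where
  "logC r x = (\<Sum>k. (of_nat (2*k+1) / 2) ^ (r - 1) *
      (LogP r (2 * x / of_nat (2*k+1)) + (-1) ^ (r - 1) * LogP r (- 2 * x / of_nat (2*k+1))))"

end

theory Submission
  imports Defs
begin

text \<open>
  By the product formula cos (t/2) = \<Prod> (1 - t^2/(\<pi> n)^2) over odd n, ln (cos (t/2)) is a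
  series of nonpositive terms ln (1 - t^2/c^2) with c = \<pi> n, so it may be integrated
  termwise. Each term is integrated by parts: c^(r-1) (Log P_r(t/c) + (-1)^(r-1) Log P_r(-t/c))
  has derivative -2 t^r/(c^2 - t^2), which is t^(r-1) times the derivative of
  ln (1 - t^2/c^2). At the upper limit \<pi>/2 the logarithms sum to ln (cos (\<pi>/4)) = - ln 2 / 2,
  and by homogeneity the Log P_r terms are (2\<pi>)^(r-1) times the terms of the series for
  log C_r(1/4).
\<close>

definition LogP_real :: "nat \<Rightarrow> real \<Rightarrow> real" where
  "LogP_real r y = ln (1 - y) + (\<Sum>j=1..r. y ^ j / of_nat j)"

lemma LogP_of_real:
  assumes "y < 1"
  shows "LogP r (of_real y) = of_real (LogP_real r y)"
  using Ln_of_real[of "1 - y"] assms by (simp add: LogP_def LogP_real_def)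

lemma LogP_real_0 [simp]: "LogP_real r 0 = 0"
  by (simp add: LogP_real_def sum.neutral)

lemma has_real_derivative_LogP_real:
  assumes "y < 1"
  shows "(LogP_real r has_real_derivative - (y ^ r) / (1 - y)) (at y)"
proof -
  have "(LogP_real r has_real_derivative - 1 / (1 - y) + (\<Sum>j=1..r. y ^ (j - 1))) (at y)"
    unfolding LogP_real_def [abs_def]
    by (rule derivative_eq_intros refl | use assms in simp)+
  moreover have "(\<Sum>j=1..r. y ^ (j - 1)) = (\<Sum>i<r. y ^ i)"
    by (rule sum.reindex_bij_witness[of _ Suc "\<lambda>j. j - 1"]) auto
  ultimately show ?thesis
    using assms by (simp add: sum_gp_strict divide_simps)
qed

lemma minus_one_power_pred_mult_power_minus:
  fixes u :: "'a::comm_ring_1"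
  assumes "r \<ge> 1"
  shows "(-1) ^ (r - 1) * (- u) ^ r = - (u ^ r)"
proof -
  obtain q where r: "r = Suc q"
    using assms by (cases r) auto
  have "(-1) ^ q * (-1) ^ r = - ((-1) ^ q * (-1 :: 'a) ^ q)"
    unfolding r power_Suc by simp
  also have "\<dots> = -1"
    by (simp flip: power_mult_distrib)
  finally show ?thesis
    by (metis diff_Suc_1 r power_minus mult.assoc mult_minus1)
qed

text \<open>With \<open>c = n / 2\<close> this is the term of index \<open>n\<close> in the series defining \<open>logC\<close>.\<close>
definition LogP_sym :: "nat \<Rightarrow> real \<Rightarrow> real \<Rightarrow> real" where
  "LogP_sym r c x = c ^ (r - 1) * (LogP_real r (x / c) + (-1) ^ (r - 1) * LogP_real r (- x / c))"

lemma LogP_sym_0 [simp]: "LogP_sym r c 0 = 0"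
  by (simp add: LogP_sym_def)

lemma LogP_sym_scale:
  assumes "s \<noteq> 0"
  shows "LogP_sym r (s * c) (s * x) = s ^ (r - 1) * LogP_sym r c x"
  using assms by (simp add: LogP_sym_def power_mult_distrib)

lemma has_real_derivative_LogP_sym:
  assumes "r \<ge> 1" and "\<bar>x\<bar> < c"
  shows "(LogP_sym r c has_real_derivative - 2 * x ^ r / (c\<^sup>2 - x\<^sup>2)) (at x)"
proof -
  obtain q where r: "r = Suc q" using assms(1) by (cases r) auto
  have c: "c > 0"
    using assms(2) by linarith
  define u where "u = x / c"
  have u: "u < 1" "- u < 1"
    using assms(2) c by (auto simp: u_def divide_less_eq less_divide_eq abs_less_iff)
  have plus: "((\<lambda>x. LogP_real r (x / c)) has_real_derivative - (u ^ r) / (1 - u) * (1 / c)) (at x)"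
    using DERIV_chain2[OF has_real_derivative_LogP_real DERIV_cdivide[OF DERIV_ident, of c]] u
    by (simp add: u_def)
  have minus: "((\<lambda>x. LogP_real r (- x / c)) has_real_derivative - ((- u) ^ r) / (1 + u) * (- 1 / c)) (at x)"
    using DERIV_chain2[OF has_real_derivative_LogP_real DERIV_cdivide[OF DERIV_minus[OF DERIV_ident], of c]] u
    by (simp add: u_def)
  have "(LogP_sym r c has_real_derivative
      c ^ q * (- (u ^ r) / (1 - u) * (1 / c) + (-1) ^ q * (- ((- u) ^ r) / (1 + u) * (- 1 / c)))) (at x)"
    unfolding LogP_sym_def [abs_def] r diff_Suc_1
    by (intro DERIV_cmult DERIV_add plus [unfolded r] minus [unfolded r])
  moreover have "c ^ q * (- (u ^ r) / (1 - u) * (1 / c) + (-1) ^ q * (- ((- u) ^ r) / (1 + u) * (- 1 / c)))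
      = - 2 * x ^ r / (c\<^sup>2 - x\<^sup>2)"
  proof -
    have sign: "(-1) ^ q * (- u) ^ r = - (u ^ r)"
      using minus_one_power_pred_mult_power_minus [of r u] assms(1) by (simp add: r)
    have scale: "c ^ q * u ^ r / c = x ^ r / c\<^sup>2"
      using c by (simp add: u_def r power_divide power2_eq_square)
    have denom: "c\<^sup>2 * (1 - u\<^sup>2) = c\<^sup>2 - x\<^sup>2"
      using c by (simp add: u_def power_divide algebra_simps)
    have "c ^ q * (- (u ^ r) / (1 - u) * (1 / c) + (-1) ^ q * (- ((- u) ^ r) / (1 + u) * (- 1 / c)))
        = - (c ^ q * u ^ r / c) * (1 / (1 - u) + 1 / (1 + u))"
      by (simp add: sign algebra_simps)
    also have "\<dots> = - 2 * x ^ r / (c\<^sup>2 * (1 - u\<^sup>2))"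
      unfolding scale using u c by (simp add: field_simps power2_eq_square)
    finally show ?thesis
      unfolding denom .
  qed
  ultimately show ?thesis
    by simp
qed

lemma one_minus_square_div_square_pos:
  fixes t c :: real
  assumes "\<bar>t\<bar> < c"
  shows "0 < 1 - t\<^sup>2 / c\<^sup>2"
proof -
  have "t\<^sup>2 < c\<^sup>2"
    using power_strict_mono[OF assms abs_ge_zero, of 2] by simp
  then show ?thesis
    by (simp add: divide_less_eq)
qed

lemma has_integral_power_mult_ln_one_minus_square:
  fixes b c :: real and m :: nat
  assumes "0 \<le> b" and "b < c"
  shows "((\<lambda>t. t ^ m * ln (1 - t\<^sup>2 / c\<^sup>2)) has_integral
           (b ^ (m + 1) * ln (1 - b\<^sup>2 / c\<^sup>2) - LogP_sym (m + 2) c b) / (m + 1)) {0..b}"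
proof -
  define H where "H t = (t ^ (m + 1) * ln (1 - t\<^sup>2 / c\<^sup>2) - LogP_sym (m + 2) c t) / (m + 1)" for t
  have "(H has_real_derivative t ^ m * ln (1 - t\<^sup>2 / c\<^sup>2)) (at t)" if "t \<in> {0..b}" for t
  proof -
    have t: "\<bar>t\<bar> < c"
      using that assms by auto
    have pos: "0 < 1 - t\<^sup>2 / c\<^sup>2"
      using one_minus_square_div_square_pos [OF t] .
    moreover have "c > 0"
      using t by linarith
    ultimately have ne: "c\<^sup>2 - t\<^sup>2 \<noteq> 0"
      by (auto simp: field_simps)
    have power: "((\<lambda>t. t ^ (m + 1)) has_real_derivative (m + 1) * t ^ m) (at t)"
      using DERIV_pow[of "m + 1" t] by simp
    have log: "((\<lambda>t. ln (1 - t\<^sup>2 / c\<^sup>2)) has_real_derivative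
        1 / (1 - t\<^sup>2 / c\<^sup>2) * (- (2 * t / c\<^sup>2))) (at t)"
      using DERIV_chain2[OF DERIV_ln_divide[OF pos]
          DERIV_diff[OF DERIV_const[of 1] DERIV_cdivide[OF DERIV_pow[of 2 t], of "c\<^sup>2"]]]
      by simp
    have "(H has_real_derivative
        ((m + 1) * t ^ m * ln (1 - t\<^sup>2 / c\<^sup>2)
         + t ^ (m + 1) * (1 / (1 - t\<^sup>2 / c\<^sup>2) * (- (2 * t / c\<^sup>2)))
         - - 2 * t ^ (m + 2) / (c\<^sup>2 - t\<^sup>2)) / (m + 1)) (at t)"
      unfolding H_def [abs_def]
      using DERIV_cdivide[OF DERIV_diff[OF DERIV_mult[OF power log]
          has_real_derivative_LogP_sym[of "m + 2" t c]], where c = "m + 1"] t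
      by (simp add: mult_ac)
    moreover have "t ^ (m + 1) * (1 / (1 - t\<^sup>2 / c\<^sup>2) * (- (2 * t / c\<^sup>2))) = - 2 * t ^ (m + 2) / (c\<^sup>2 - t\<^sup>2)"
      using pos ne t by (simp add: field_simps power2_eq_square)
    ultimately show ?thesis
      by simp
  qed
  then have "((\<lambda>t. t ^ m * ln (1 - t\<^sup>2 / c\<^sup>2)) has_integral H b - H 0) {0..b}"
    using assms(1)
    by (intro fundamental_theorem_of_calculus)
       (auto simp: has_real_derivative_iff_has_vector_derivative [symmetric]
             intro: has_field_derivative_at_within)
  then show ?thesis
    by (simp add: H_def)
qed

lemma prod_atLeast1_atMost_double:
  fixes f :: "nat \<Rightarrow> 'a::comm_monoid_mult"
  shows "(\<Prod>k=1..2*N. f k) = (\<Prod>k=1..N. f (2 * k)) * (\<Prod>j<N. f (2 * j + 1))"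
proof (induction N)
  case 0
  then show ?case by simp
next
  case (Suc N)
  have "2 * Suc N = Suc (Suc (2 * N))"
    by simp
  then show ?case
    using Suc by (simp add: prod.nat_ivl_Suc' mult_ac)
qed

text \<open>The even-indexed factors of the sine product at \<open>y\<close> form the sine product at \<open>y / 2\<close>,
  and \<open>sin (\<pi> y) = 2 sin (\<pi> y / 2) cos (\<pi> y / 2)\<close>.\<close>
lemma cos_product_formula_real:
  fixes y :: real
  assumes "\<bar>y\<bar> < 2"
  shows "(\<lambda>N. \<Prod>j<N. 1 - y\<^sup>2 / real (2 * j + 1) ^ 2) \<longlonglongrightarrow> cos (pi * y / 2)"
proof (cases "y = 0")
  case True
  then show ?thesis by simp
next
  case False
  define P where "P N = (\<Prod>k=1..N. 1 - y\<^sup>2 / of_nat k ^ 2)" for N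
  define Q where "Q N = (\<Prod>k=1..N. 1 - (y / 2)\<^sup>2 / of_nat k ^ 2)" for N
  have "(\<lambda>N. P (2 * N)) \<longlonglongrightarrow> sin (pi * y) / (pi * y)"
    using LIMSEQ_subseq_LIMSEQ[OF sin_product_formula_real'[OF False], of "\<lambda>N. 2 * N"]
    by (simp add: P_def strict_mono_def o_def)
  moreover have Q: "Q \<longlonglongrightarrow> sin (pi * (y / 2)) / (pi * (y / 2))"
    unfolding Q_def using sin_product_formula_real'[of "y / 2"] False by simp
  moreover have sin_half: "sin (pi * (y / 2)) \<noteq> 0"
  proof
    assume "sin (pi * (y / 2)) = 0"
    then obtain n :: int where "pi * (y / 2) = of_int n * pi"
      by (auto simp: sin_zero_iff_int2)
    then have "y = 2 * of_int n"
      by simp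
    with assms False show False
      by (cases n "0::int" rule: linorder_cases) auto
  qed
  ultimately have "(\<lambda>N. P (2 * N) / Q N)
      \<longlonglongrightarrow> sin (pi * y) / (pi * y) / (sin (pi * (y / 2)) / (pi * (y / 2)))"
    using False by (intro tendsto_divide) auto
  moreover have "sin (pi * y) / (pi * y) / (sin (pi * (y / 2)) / (pi * (y / 2))) = cos (pi * y / 2)"
    using sin_double[of "pi * y / 2"] sin_half False by (simp add: field_simps)
  moreover have "P (2 * N) / Q N = (\<Prod>j<N. 1 - y\<^sup>2 / real (2 * j + 1) ^ 2)" for N
  proof -
    have "Q N > 0"
      unfolding Q_def
    proof (rule prod_pos)
      fix k assume "k \<in> {1..N}"
      then have "1 \<le> real k ^ 2"
        by simp
      moreover have "(y / 2)\<^sup>2 < 1"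
        using assms by (simp add: abs_square_less_1)
      ultimately show "0 < 1 - (y / 2)\<^sup>2 / real k ^ 2"
        by (simp add: divide_less_eq)
    qed
    moreover have "P (2 * N) = Q N * (\<Prod>j<N. 1 - y\<^sup>2 / real (2 * j + 1) ^ 2)"
      unfolding P_def Q_def prod_atLeast1_atMost_double
      by (intro arg_cong2[where f = "(*)"] prod.cong) (auto simp: power_divide power_mult_distrib)
    ultimately show ?thesis
      by simp
  qed
  ultimately show ?thesis by simp
qed

lemma ln_cos_half_sums:
  fixes t :: real
  assumes "\<bar>t\<bar> < pi"
  shows "(\<lambda>k. ln (1 - t\<^sup>2 / (pi * real (2 * k + 1))\<^sup>2)) sums ln (cos (t / 2))"
proof -
  have factor_pos: "0 < 1 - t\<^sup>2 / (pi * real (2 * k + 1))\<^sup>2" for k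
  proof (rule one_minus_square_div_square_pos)
    have "pi \<le> pi * real (2 * k + 1)"
      by simp
    then show "\<bar>t\<bar> < pi * real (2 * k + 1)"
      using assms by linarith
  qed
  have "\<bar>t / pi\<bar> < 2"
    using assms by (simp add: abs_divide divide_less_eq)
  from cos_product_formula_real[OF this]
  have "(\<lambda>N. \<Prod>j<N. 1 - t\<^sup>2 / (pi * real (2 * j + 1))\<^sup>2) \<longlonglongrightarrow> cos (t / 2)"
    by (simp add: power_divide power_mult_distrib)
  moreover have "cos (t / 2) > 0"
    using assms by (intro cos_gt_zero_pi) auto
  ultimately have "(\<lambda>N. ln (\<Prod>j<N. 1 - t\<^sup>2 / (pi * real (2 * j + 1))\<^sup>2)) \<longlonglongrightarrow> ln (cos (t / 2))"
    by (intro tendsto_ln) auto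
  moreover have "ln (\<Prod>j<N. 1 - t\<^sup>2 / (pi * real (2 * j + 1))\<^sup>2)
      = (\<Sum>j<N. ln (1 - t\<^sup>2 / (pi * real (2 * j + 1))\<^sup>2))" for N
    by (rule ln_prod) (simp, rule factor_pos [THEN less_imp_neq, symmetric])
  ultimately show ?thesis
    unfolding sums_def by simp
qed

lemma sums_integral_nonpos:
  fixes f :: "nat \<Rightarrow> 'a::euclidean_space \<Rightarrow> real"
  assumes integral: "\<And>k. (f k has_integral I k) S"
    and nonpos: "\<And>k x. x \<in> S \<Longrightarrow> f k x \<le> 0"
    and sums: "\<And>x. x \<in> S \<Longrightarrow> (\<lambda>k. f k x) sums g x"
    and "g integrable_on S"
  shows "I sums integral S g"
proof -
  have bound: "norm (\<Sum>k<N. f k x) \<le> - g x" if x: "x \<in> S" for N x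
  proof -
    have "(\<lambda>k. - f k x) sums - g x"
      using sums_minus[OF sums[OF x]] .
    then have "(\<Sum>k<N. - f k x) \<le> - g x"
      using sum_le_suminf[of "\<lambda>k. - f k x" "{..<N}"] nonpos[OF x] by (auto simp: sums_iff)
    moreover have "(\<Sum>k<N. f k x) \<le> 0"
      using nonpos[OF x] by (simp add: sum_nonpos)
    ultimately show ?thesis
      by (simp add: sum_negf)
  qed
  have "(\<lambda>N. integral S (\<lambda>x. \<Sum>k<N. f k x)) \<longlonglongrightarrow> integral S g"
  proof (rule dominated_convergence(2))
    show "(\<lambda>x. \<Sum>k<N. f k x) integrable_on S" for N
      using integral by (intro integrable_sum) auto
    show "(\<lambda>x. - g x) integrable_on S"
      using assms(4) by (rule integrable_neg)
    show "(\<lambda>N. \<Sum>k<N. f k x) \<longlonglongrightarrow> g x" if "x \<in> S" for x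
      using sums[OF that] by (simp add: sums_def)
  qed (rule bound)
  moreover have "integral S (\<lambda>x. \<Sum>k<N. f k x) = (\<Sum>k<N. I k)" for N
    using integral by (intro integral_unique has_integral_sum) auto
  ultimately show ?thesis
    by (simp add: sums_def)
qed

lemma integral_power_mult_ln_cos_half_sums:
  fixes m :: nat
  shows "(\<lambda>k. ((pi / 2) ^ (m + 1) * ln (1 - (pi / 2)\<^sup>2 / (pi * real (2 * k + 1))\<^sup>2)
              - LogP_sym (m + 2) (pi * real (2 * k + 1)) (pi / 2)) / (m + 1))
         sums integral {0..pi / 2} (\<lambda>t. t ^ m * ln (cos (t / 2)))"
proof (rule sums_integral_nonpos)
  have half_pi: "\<bar>t\<bar> < pi" if "t \<in> {0..pi / 2}" for t
  proof -
    have "0 \<le> t" "t \<le> pi / 2"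
      using that by auto
    then show ?thesis
      using pi_gt_zero by (simp only: abs_of_nonneg)
  qed
  have small: "\<bar>t\<bar> < pi * real (2 * k + 1)" if "t \<in> {0..pi / 2}" for t k
  proof -
    have "pi \<le> pi * real (2 * k + 1)"
      by simp
    then show ?thesis
      using half_pi [OF that] by linarith
  qed
  show "((\<lambda>t. t ^ m * ln (1 - t\<^sup>2 / (pi * real (2 * k + 1))\<^sup>2)) has_integral
      ((pi / 2) ^ (m + 1) * ln (1 - (pi / 2)\<^sup>2 / (pi * real (2 * k + 1))\<^sup>2)
       - LogP_sym (m + 2) (pi * real (2 * k + 1)) (pi / 2)) / (m + 1)) {0..pi / 2}" for k
    using small [of "pi / 2" k] by (intro has_integral_power_mult_ln_one_minus_square) auto
  show "t ^ m * ln (1 - t\<^sup>2 / (pi * real (2 * k + 1))\<^sup>2) \<le> 0" if "t \<in> {0..pi / 2}" for k t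
    using that one_minus_square_div_square_pos [OF small [OF that]]
    by (intro mult_nonneg_nonpos) auto
  show "(\<lambda>k. t ^ m * ln (1 - t\<^sup>2 / (pi * real (2 * k + 1))\<^sup>2)) sums (t ^ m * ln (cos (t / 2)))"
    if "t \<in> {0..pi / 2}" for t
    using half_pi [OF that] by (intro sums_mult ln_cos_half_sums)
  have cos_pos: "cos (t / 2) > 0" if "t \<in> {0..pi / 2}" for t
    using half_pi [OF that] by (intro cos_gt_zero_pi) auto
  then show "(\<lambda>t. t ^ m * ln (cos (t / 2))) integrable_on {0..pi / 2}"
    by (intro integrable_continuous_interval continuous_intros) (auto dest: cos_pos)
qed

lemma logC_of_real:
  fixes x s :: real
  assumes "\<bar>x\<bar> < 1 / 2"
    and "(\<lambda>k. LogP_sym r (real (2 * k + 1) / 2) x) sums s"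
  shows "logC r (of_real x) = of_real s"
proof -
  have "(of_nat (2 * k + 1) / 2) ^ (r - 1) *
      (LogP r (2 * of_real x / of_nat (2 * k + 1))
       + (-1) ^ (r - 1) * LogP r (- 2 * of_real x / of_nat (2 * k + 1)))
    = of_real (LogP_sym r (real (2 * k + 1) / 2) x)" for k
  proof -
    define n where "n = real (2 * k + 1) / 2"
    have "0 < n" "\<bar>x\<bar> < n"
      using assms(1) by (simp_all add: n_def)
    then have "x / n < 1" "- x / n < 1"
      by (simp_all add: pos_divide_less_eq pos_less_divide_eq abs_less_iff)
    moreover have "2 * of_real x / of_nat (2 * k + 1) = (of_real (x / n) :: complex)"
      and "- 2 * of_real x / of_nat (2 * k + 1) = (of_real (- x / n) :: complex)"
      and "of_nat (2 * k + 1) / 2 = (of_real n :: complex)"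
      by (simp_all add: n_def field_simps)
    ultimately show ?thesis
      unfolding n_def [symmetric] LogP_sym_def by (simp only: LogP_of_real) simp
  qed
  then have "logC r (of_real x) = (\<Sum>k. of_real (LogP_sym r (real (2 * k + 1) / 2) x))"
    by (simp add: logC_def)
  also have "\<dots> = of_real s"
    by (rule sums_unique [symmetric]) (rule sums_of_real [OF assms(2)])
  finally show ?thesis .
qed

lemma LogP_sym_quarter_sums:
  fixes m :: nat and J :: real
  defines "J \<equiv> integral {0..pi / 2} (\<lambda>t. t ^ m * ln (cos (t / 2)))"
  shows "(\<lambda>k. LogP_sym (m + 2) (real (2 * k + 1) / 2) (1 / 4))
           sums (((pi / 2) ^ (m + 1) * (- ln 2 / 2) - (m + 1) * J) / (2 * pi) ^ (m + 1))"
proof -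
  define A B where "A = (pi / 2) ^ (m + 1)" and "B = (2 * pi) ^ (m + 1)"
  define L where "L k = ln (1 - (pi / 2)\<^sup>2 / (pi * real (2 * k + 1))\<^sup>2)" for k
  define T where "T k = LogP_sym (m + 2) (real (2 * k + 1) / 2) (1 / 4)" for k
  have "LogP_sym (m + 2) (pi * real (2 * k + 1)) (pi / 2) = B * T k" for k
    using LogP_sym_scale [of "2 * pi" "m + 2" "real (2 * k + 1) / 2" "1 / 4"] by (simp add: B_def T_def)
  then have "(\<lambda>k. (A * L k - B * T k) / (m + 1)) sums J"
    using integral_power_mult_ln_cos_half_sums [of m] by (simp add: J_def A_def L_def)
  from sums_mult [OF this, of "m + 1"] have J_sums: "(\<lambda>k. A * L k - B * T k) sums ((m + 1) * J)"
    by simp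
  have "\<bar>pi / 2\<bar> < pi"
    by simp
  from ln_cos_half_sums [OF this] have "L sums (- ln 2 / 2)"
    unfolding L_def by (simp add: cos_45 ln_div ln_sqrt)
  from sums_diff [OF sums_mult [OF this, of A] J_sums]
  have "(\<lambda>k. B * T k) sums (A * (- ln 2 / 2) - (m + 1) * J)"
    by simp
  moreover have "B \<noteq> 0"
    by (simp add: B_def)
  ultimately show ?thesis
    using sums_divide [of "\<lambda>k. B * T k" _ B] by (simp add: A_def B_def T_def)
qed

lemma integral_power_mult_ln_cos_half:
  fixes m :: nat
  shows "integral {0..pi / 2} (\<lambda>t. t ^ m * ln (cos (t / 2)))
    = - (pi ^ (m + 1) / (m + 1)) *
        (ln 2 / 2 ^ (m + 2) + 2 ^ (m + 1) * (\<Sum>k. LogP_sym (m + 2) (real (2 * k + 1) / 2) (1 / 4)))"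
proof -
  define J where "J = integral {0..pi / 2} (\<lambda>t. t ^ m * ln (cos (t / 2)))"
  define p q M where "p = pi ^ (m + 1)" and "q = (2 :: real) ^ (m + 1)" and "M = real (m + 1)"
  have "(pi / 2) ^ (m + 1) = p / q" "(2 * pi) ^ (m + 1) = q * p" "(2 :: real) ^ (m + 2) = 2 * q"
    by (simp_all add: p_def q_def power_divide power_mult_distrib)
  then have "(\<Sum>k. LogP_sym (m + 2) (real (2 * k + 1) / 2) (1 / 4)) = (p / q * (- ln 2 / 2) - M * J) / (q * p)"
    and two: "(2 :: real) ^ (m + 2) = 2 * q"
    using sums_unique [OF LogP_sym_quarter_sums [of m]] by (simp_all add: J_def M_def)
  moreover have "p > 0" "q > 0" "M > 0"
    by (simp_all add: p_def q_def M_def)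
  ultimately show ?thesis
    unfolding J_def [symmetric] p_def [symmetric] q_def [symmetric] M_def [symmetric] two
    by (simp add: field_simps)
qed

theorem corollary2p2:
  fixes r :: nat
  assumes "r \<ge> 2"
  shows "complex_of_real (integral {0..pi/2} (\<lambda>\<theta>. \<theta> ^ (r - 2) * ln (cos (\<theta> / 2))))
    = - (of_real (pi ^ (r - 1)) / of_nat (r - 1)) *
        (of_real (ln 2) / 2 ^ r + 2 ^ (r - 1) * logC r (1/4))"
proof -
  obtain m where r: "r = m + 2"
    using assms le_Suc_ex by (metis add.commute)
  have "logC r (of_real (1 / 4)) = of_real (\<Sum>k. LogP_sym r (real (2 * k + 1) / 2) (1 / 4))"
    using LogP_sym_quarter_sums [of m]
    by (intro logC_of_real) (auto simp: r intro: summable_sums sums_summable)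
  then show ?thesis
    using arg_cong [OF integral_power_mult_ln_cos_half [of m], of complex_of_real]
    by (simp add: r)
qed

end
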